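(* Let $\Pi$ be a problem with input in the black-white formalism. Suppose all node degrees are at most $\Delta$ and $\Pi$ has at most $L$ output labels. Suppose $\Pi$ cannot be solved in $0$ rounds by a deterministic white algorithm in the PN model, even if a solution of a problem $\Pi_{\mathrm{in}}$ is given as input. Then every randomized $0$-round white algorithm for $\Pi$, given a solution of $\Pi_{\mathrm{in}}$ as input, fails with probability at least $1/L^{\Delta^2}$.
   Context: A problem with input in the black-white formalism is $(\Sigma_{\mathrm{in}},\Sigma_{\mathrm{out}},\mathcal{N}=(\mathcal{N}^1,\dots,\mathcal{N}^\Delta),\mathcal{E}=(\mathcal{E}^1,\dots,\mathcal{E}^\delta),g)$. Here: - $\mathcal{N}^i$ and $\mathcal{E}^i$ are sets of cardinality-$i$ multisets of output labels, giving the allowed label multisets around white, resp. black, nodes of degree $i$; - $g:\Sigma_{\mathrm{in}}\to2^{\Sigma_{\mathrm{out}}}$ restricts the output on an edge given its input label. Instances are $2$-colored bipartite graphs with input labels on edges. "Given a solution of $\Pi_{\mathrm{in}}$" (where $\Pi_{\mathrm{in}}$ is a problem without inputs whose outputs are in $\Sigma_{\mathrm{in}}$) means the input labels form a valid solution of $\Pi_{\mathrm{in}}$. A $0$-round white algorithm in the PN model lets each white node choose output labels on its incident edges knowing only its degree, its port numbering and its incident input labels; in the randomized case it may also use private random bits. Failing means some constraint is violated, in particular at some black node, on some instance. *)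

theory Defs
  imports "HOL-Library.Multiset" "HOL-Probability.Product_PMF"
begin

text \<open>A problem with input: output labels, white constraints (indexed by degree),
  black constraints (indexed by degree), and the input-output compatibility map g.\<close>
record ('i, 'o) bw_problem =
  sigma_in  :: "'i set"
  sigma_out :: "'o set"
  wconstr   :: "nat \<Rightarrow> 'o multiset set"
  bconstr   :: "nat \<Rightarrow> 'o multiset set"
  gmap      :: "'i \<Rightarrow> 'o set"

record 'i bw_problem_noin =
  sigma    :: "'i set"
  wconstr0 :: "nat \<Rightarrow> 'i multiset set"
  bconstr0 :: "nat \<Rightarrow> 'i multiset set"

definition wf_problem :: "('i, 'o) bw_problem \<Rightarrow> bool" where
  "wf_problem P \<longleftrightarrow>
     (\<forall>d. \<forall>M \<in> wconstr P d. size M = d \<and> set_mset M \<subseteq> sigma_out P) \<and>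
     (\<forall>d. \<forall>M \<in> bconstr P d. size M = d \<and> set_mset M \<subseteq> sigma_out P) \<and>
     (\<forall>x \<in> sigma_in P. gmap P x \<subseteq> sigma_out P)"

definition wf_problem_noin :: "'i bw_problem_noin \<Rightarrow> bool" where
  "wf_problem_noin Q \<longleftrightarrow>
     (\<forall>d. \<forall>M \<in> wconstr0 Q d. size M = d \<and> set_mset M \<subseteq> sigma Q) \<and>
     (\<forall>d. \<forall>M \<in> bconstr0 Q d. size M = d \<and> set_mset M \<subseteq> sigma Q)"

text \<open>White nodes, black nodes and edges are natural numbers (white and black nodes live
  in separate name spaces). Each edge e joins white node wend e and black node bend e;
  port e is the port number of e at its white endpoint; inp e is its input label.\<close>
record 'i bw_instance =
  wnodes :: "nat set"
  bnodes :: "nat set"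
  edges  :: "nat set"
  wend   :: "nat \<Rightarrow> nat"
  bend   :: "nat \<Rightarrow> nat"
  port   :: "nat \<Rightarrow> nat"
  inp    :: "nat \<Rightarrow> 'i"

definition wedges :: "'i bw_instance \<Rightarrow> nat \<Rightarrow> nat set" where
  "wedges G w = {e \<in> edges G. wend G e = w}"

definition bedges :: "'i bw_instance \<Rightarrow> nat \<Rightarrow> nat set" where
  "bedges G b = {e \<in> edges G. bend G e = b}"

definition wdeg :: "'i bw_instance \<Rightarrow> nat \<Rightarrow> nat" where
  "wdeg G w = card (wedges G w)"

definition bdeg :: "'i bw_instance \<Rightarrow> nat \<Rightarrow> nat" where
  "bdeg G b = card (bedges G b)"

definition wf_instance :: "nat \<Rightarrow> 'i bw_instance \<Rightarrow> bool" where
  "wf_instance \<Delta> G \<longleftrightarrow>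
     finite (wnodes G) \<and> finite (bnodes G) \<and> finite (edges G) \<and>
     (\<forall>e \<in> edges G. wend G e \<in> wnodes G \<and> bend G e \<in> bnodes G) \<and>
     (\<forall>w \<in> wnodes G. 1 \<le> wdeg G w \<and> wdeg G w \<le> \<Delta>) \<and>
     (\<forall>b \<in> bnodes G. 1 \<le> bdeg G b \<and> bdeg G b \<le> \<Delta>) \<and>
     (\<forall>w \<in> wnodes G. bij_betw (port G) (wedges G w) {..<wdeg G w})"

definition valid_noin :: "'i bw_problem_noin \<Rightarrow> 'i bw_instance \<Rightarrow> (nat \<Rightarrow> 'i) \<Rightarrow> bool" where
  "valid_noin Q G lab \<longleftrightarrow>
     (\<forall>e \<in> edges G. lab e \<in> sigma Q) \<and>
     (\<forall>w \<in> wnodes G. image_mset lab (mset_set (wedges G w)) \<in> wconstr0 Q (wdeg G w)) \<and>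
     (\<forall>b \<in> bnodes G. image_mset lab (mset_set (bedges G b)) \<in> bconstr0 Q (bdeg G b))"

definition valid_out :: "('i, 'o) bw_problem \<Rightarrow> 'i bw_instance \<Rightarrow> (nat \<Rightarrow> 'o) \<Rightarrow> bool" where
  "valid_out P G out \<longleftrightarrow>
     (\<forall>e \<in> edges G. out e \<in> sigma_out P \<and> out e \<in> gmap P (inp G e)) \<and>
     (\<forall>w \<in> wnodes G. image_mset out (mset_set (wedges G w)) \<in> wconstr P (wdeg G w)) \<and>
     (\<forall>b \<in> bnodes G. image_mset out (mset_set (bedges G b)) \<in> bconstr P (bdeg G b))"

definition admissible :: "nat \<Rightarrow> 'i bw_problem_noin \<Rightarrow> 'i bw_instance \<Rightarrow> bool" where
  "admissible \<Delta> Q G \<longleftrightarrow> wf_instance \<Delta> G \<and> valid_noin Q G (inp G)"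

definition port_edge :: "'i bw_instance \<Rightarrow> nat \<Rightarrow> nat \<Rightarrow> nat" where
  "port_edge G w p = (THE e. e \<in> wedges G w \<and> port G e = p)"

definition wview :: "'i bw_instance \<Rightarrow> nat \<Rightarrow> 'i list" where
  "wview G w = map (\<lambda>p. inp G (port_edge G w p)) [0..<wdeg G w]"

text \<open>A deterministic 0-round white algorithm maps (degree, input labels in port order)
  to an output label for each port. Output of the algorithm on an edge:\<close>
type_synonym ('i, 'o) det_alg = "nat \<Rightarrow> 'i list \<Rightarrow> nat \<Rightarrow> 'o"

definition det_output :: "('i, 'o) det_alg \<Rightarrow> 'i bw_instance \<Rightarrow> nat \<Rightarrow> 'o" where
  "det_output D G e = D (wdeg G (wend G e)) (wview G (wend G e)) (port G e)"

text \<open>A randomized 0-round white algorithm: using private random bits, each white node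
  draws (independently of the other nodes) its port-indexed output according to a
  distribution that depends only on its degree and its port-ordered input labels.\<close>
type_synonym ('i, 'o) rand_alg = "nat \<Rightarrow> 'i list \<Rightarrow> (nat \<Rightarrow> 'o) pmf"

definition rand_outcome :: "('i, 'o) rand_alg \<Rightarrow> 'i bw_instance \<Rightarrow> (nat \<Rightarrow> nat \<Rightarrow> 'o) pmf" where
  "rand_outcome A G = Pi_pmf (wnodes G) (\<lambda>_. undefined) (\<lambda>w. A (wdeg G w) (wview G w))"

definition fail_prob :: "('i, 'o) bw_problem \<Rightarrow> ('i, 'o) rand_alg \<Rightarrow> 'i bw_instance \<Rightarrow> real" where
  "fail_prob P A G = measure_pmf.prob (rand_outcome A G)
     {c. \<not> valid_out P G (\<lambda>e. c (wend G e) (port G e))}"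

end

theory Submission
  imports Defs
begin

text \<open>Derandomization by pigeonhole. A white node of degree \<open>d\<close> has at most \<open>L^d\<close> outputs
  within the alphabet, so for each view there is an output \<open>g\<close> such that the randomized
  algorithm produces \<open>g\<close> or a label outside the alphabet with probability at least \<open>1/L^d\<close>.
  The deterministic algorithm choosing these \<open>g\<close> fails on some admissible instance, and the
  failure is witnessed at a single edge, white node or black node, hence involves at most
  \<open>\<Delta>\<close> white nodes. These randomize independently, so with probability at least
  \<open>(1/L^\<Delta>)^\<Delta>\<close> each of them reproduces the deterministic output or uses an illegal
  label, and either way the randomized algorithm fails as well.\<close>

lemma prob_cover_ge_inverse_card:
  fixes M :: "'a pmf"
  assumes "finite I" "I \<noteq> {}" and cover: "\<And>x. \<exists>i\<in>I. x \<in> A i"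
  shows "\<exists>i\<in>I. 1 / real (card I) \<le> measure_pmf.prob M (A i)"
proof (rule ccontr)
  assume "\<not> ?thesis"
  then have small: "\<And>i. i \<in> I \<Longrightarrow> measure_pmf.prob M (A i) < 1 / real (card I)"
    by auto
  have "(\<Union>i\<in>I. A i) = UNIV"
    using cover by blast
  then have "1 = measure_pmf.prob M (\<Union>i\<in>I. A i)"
    by simp
  also have "\<dots> \<le> (\<Sum>i\<in>I. measure_pmf.prob M (A i))"
    using \<open>finite I\<close> by (intro measure_pmf.finite_measure_subadditive_finite) auto
  also have "\<dots> < real (card I) * (1 / real (card I))"
    using assms small by (intro sum_bounded_above_strict) (auto simp: card_gt_0_iff)
  also have "\<dots> = 1"
    using assms by simp
  finally show False by simp
qed

definition agrees_or_escapes :: "'o set \<Rightarrow> nat \<Rightarrow> (nat \<Rightarrow> 'o) \<Rightarrow> (nat \<Rightarrow> 'o) set" where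
  "agrees_or_escapes S d g = {f. (\<forall>p<d. f p = g p) \<or> (\<exists>p<d. f p \<notin> S)}"

lemma ex_likely_agrees_or_escapes:
  fixes M :: "(nat \<Rightarrow> 'o) pmf"
  assumes "finite S" "card S \<le> L"
  shows "\<exists>g. (1 / real L) ^ d \<le> measure_pmf.prob M (agrees_or_escapes S d g)"
proof (cases "PiE {..<d} (\<lambda>_. S) = {}")
  case True
  then have "agrees_or_escapes S d g = UNIV" for g
    by (auto simp: agrees_or_escapes_def PiE_eq_empty_iff)
  moreover have "(1 / real L) ^ d \<le> 1"
    by (cases "L = 0") (auto intro: power_le_one)
  ultimately show ?thesis by simp
next
  case False
  define V where "V = PiE {..<d} (\<lambda>_. S)"
  have "finite V" "V \<noteq> {}"
    using \<open>finite S\<close> False by (auto simp: V_def finite_PiE)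
  moreover have "\<exists>g\<in>V. f \<in> agrees_or_escapes S d g" for f
  proof (cases "\<exists>p<d. f p \<notin> S")
    case True
    then show ?thesis using \<open>V \<noteq> {}\<close> by (auto simp: agrees_or_escapes_def)
  next
    case False
    then show ?thesis
      by (intro bexI[of _ "restrict f {..<d}"]) (auto simp: agrees_or_escapes_def V_def)
  qed
  ultimately obtain g where "1 / real (card V) \<le> measure_pmf.prob M (agrees_or_escapes S d g)"
    by (metis prob_cover_ge_inverse_card)
  moreover have "(1 / real L) ^ d \<le> 1 / real (card V)"
  proof -
    have "real (card V) \<le> real L ^ d"
      using \<open>card S \<le> L\<close> by (simp add: V_def card_PiE power_mono flip: of_nat_power)
    moreover have "0 < real (card V)"
      using \<open>finite V\<close> \<open>V \<noteq> {}\<close> by (simp add: card_gt_0_iff)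
    ultimately show ?thesis
      by (simp add: power_one_over frac_le)
  qed
  ultimately show ?thesis by (meson order_trans)
qed

lemma power_square_le_prod_power:
  fixes x :: real
  assumes "0 \<le> x" "x \<le> 1" "finite W" "card W \<le> n" "\<And>w. w \<in> W \<Longrightarrow> k w \<le> n"
  shows "x ^ n\<^sup>2 \<le> (\<Prod>w\<in>W. x ^ k w)"
proof -
  have "x ^ n\<^sup>2 = (x ^ n) ^ n"
    by (simp add: power2_eq_square power_mult)
  also have "\<dots> \<le> (x ^ n) ^ card W"
    using assms by (intro power_decreasing) (auto simp: power_le_one)
  also have "\<dots> = (\<Prod>w\<in>W. x ^ n)"
    by simp
  also have "\<dots> \<le> (\<Prod>w\<in>W. x ^ k w)"
    using assms by (intro prod_mono conjI power_decreasing) auto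
  finally show ?thesis .
qed

lemma image_mset_mset_set_cong:
  "(\<And>x. x \<in> A \<Longrightarrow> f x = g x) \<Longrightarrow> image_mset f (mset_set A) = image_mset g (mset_set A)"
  by (cases "finite A") (auto intro: image_mset_cong)

lemma port_lt_wdeg:
  assumes "wf_instance \<Delta> G" "e \<in> edges G"
  shows "port G e < wdeg G (wend G e)"
  using assms by (auto simp: wf_instance_def wedges_def dest!: bij_betwE)

lemma ex_edge_at_port:
  assumes "wf_instance \<Delta> G" "w \<in> wnodes G" "p < wdeg G w"
  shows "\<exists>e\<in>edges G. wend G e = w \<and> port G e = p"
proof -
  have "p \<in> port G ` wedges G w"
    using assms by (auto simp: wf_instance_def bij_betw_def)
  then show ?thesis by (auto simp: wedges_def)
qed

lemma invalid_out_local: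
  assumes wf: "wf_instance \<Delta> G" and invalid: "\<not> valid_out P G out"
  shows "\<exists>F \<subseteq> edges G. card (wend G ` F) \<le> \<Delta> \<and>
           (\<forall>out'. (\<forall>e\<in>F. out' e = out e) \<longrightarrow> \<not> valid_out P G out')"
proof -
  have wdeg: "\<And>w. w \<in> wnodes G \<Longrightarrow> 1 \<le> wdeg G w \<and> wdeg G w \<le> \<Delta>"
    and bdeg: "\<And>b. b \<in> bnodes G \<Longrightarrow> bdeg G b \<le> \<Delta>"
    and wend: "\<And>e. e \<in> edges G \<Longrightarrow> wend G e \<in> wnodes G"
    and fin: "finite (edges G)"
    using wf by (auto simp: wf_instance_def)
  consider (edge) e where "e \<in> edges G" "\<not> (out e \<in> sigma_out P \<and> out e \<in> gmap P (inp G e))"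
    | (white) w where "w \<in> wnodes G" "image_mset out (mset_set (wedges G w)) \<notin> wconstr P (wdeg G w)"
    | (black) b where "b \<in> bnodes G" "image_mset out (mset_set (bedges G b)) \<notin> bconstr P (bdeg G b)"
    using invalid unfolding valid_out_def by blast
  then show ?thesis
  proof cases
    case edge
    have "card (wend G ` {e}) \<le> \<Delta>"
      using wdeg[OF wend[OF edge(1)]] by simp
    moreover have "\<not> valid_out P G out'" if "out' e = out e" for out'
      using edge that unfolding valid_out_def by metis
    ultimately show ?thesis
      using edge(1) by (intro exI[of _ "{e}"]) auto
  next
    case white
    have "card (wend G ` wedges G w) \<le> card {w}"
      by (intro card_mono) (auto simp: wedges_def)
    then have "card (wend G ` wedges G w) \<le> \<Delta>"
      using wdeg[OF white(1)] by simp
    moreover have "\<not> valid_out P G out'" if "\<forall>e\<in>wedges G w. out' e = out e" for out'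
      using white that image_mset_mset_set_cong[of "wedges G w" out' out]
      unfolding valid_out_def by metis
    ultimately show ?thesis
      by (intro exI[of _ "wedges G w"]) (auto simp: wedges_def)
  next
    case black
    have "card (wend G ` bedges G b) \<le> card (bedges G b)"
      using fin by (intro card_image_le) (simp add: bedges_def)
    then have "card (wend G ` bedges G b) \<le> \<Delta>"
      using bdeg[OF black(1)] by (simp add: bdeg_def)
    moreover have "\<not> valid_out P G out'" if "\<forall>e\<in>bedges G b. out' e = out e" for out'
      using black that image_mset_mset_set_cong[of "bedges G b" out' out]
      unfolding valid_out_def by metis
    ultimately show ?thesis
      by (intro exI[of _ "bedges G b"]) (auto simp: bedges_def)
  qed
qed

lemma invalid_if_agrees_or_escapes:
  assumes wf: "wf_instance \<Delta> G" and "F \<subseteq> edges G"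
    and F_fatal: "\<forall>out. (\<forall>e\<in>F. out e = det_output D G e) \<longrightarrow> \<not> valid_out P G out"
    and c: "\<forall>w\<in>wend G ` F.
              c w \<in> agrees_or_escapes (sigma_out P) (wdeg G w) (D (wdeg G w) (wview G w))"
  shows "\<not> valid_out P G (\<lambda>e. c (wend G e) (port G e))"
proof (cases "\<exists>w\<in>wend G ` F. \<exists>p<wdeg G w. c w p \<notin> sigma_out P")
  case True
  then obtain w p where w: "w \<in> wend G ` F" "p < wdeg G w" "c w p \<notin> sigma_out P"
    by blast
  moreover have "w \<in> wnodes G"
    using wf w(1) \<open>F \<subseteq> edges G\<close> by (auto simp: wf_instance_def)
  ultimately obtain e where "e \<in> edges G" "wend G e = w" "port G e = p"
    using ex_edge_at_port[OF wf] by metis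
  with w(3) show ?thesis
    by (auto simp: valid_out_def)
next
  case False
  have "c (wend G e) (port G e) = det_output D G e" if "e \<in> F" for e
  proof -
    have "port G e < wdeg G (wend G e)"
      using port_lt_wdeg[OF wf] that \<open>F \<subseteq> edges G\<close> by blast
    moreover have "c (wend G e) \<in> agrees_or_escapes (sigma_out P) (wdeg G (wend G e))
                     (D (wdeg G (wend G e)) (wview G (wend G e)))"
      using c that by blast
    ultimately show ?thesis
      using False that by (auto simp: agrees_or_escapes_def det_output_def)
  qed
  then show ?thesis
    using F_fatal by auto
qed

lemma fail_prob_ge_prod:
  assumes "finite (wnodes G)" "W \<subseteq> wnodes G"
    and fatal: "\<And>c. \<forall>w\<in>W. c w \<in> B w \<Longrightarrow> \<not> valid_out P G (\<lambda>e. c (wend G e) (port G e))"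
  shows "(\<Prod>w\<in>W. measure_pmf.prob (A (wdeg G w) (wview G w)) (B w)) \<le> fail_prob P A G"
proof -
  define B' where "B' w = (if w \<in> W then B w else UNIV)" for w
  have "(\<Prod>w\<in>W. measure_pmf.prob (A (wdeg G w) (wview G w)) (B w))
      = (\<Prod>w\<in>wnodes G. measure_pmf.prob (A (wdeg G w) (wview G w)) (B' w))"
    using assms by (intro prod.mono_neutral_cong_left) (auto simp: B'_def)
  also have "\<dots> = measure_pmf.prob (rand_outcome A G) (Pi (wnodes G) B')"
    unfolding rand_outcome_def using assms by (simp add: measure_Pi_pmf_Pi)
  also have "\<dots> \<le> fail_prob P A G"
  proof -
    have "Pi (wnodes G) B' \<subseteq> {c. \<not> valid_out P G (\<lambda>e. c (wend G e) (port G e))}"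
      using \<open>W \<subseteq> wnodes G\<close> by (force simp: B'_def Pi_def intro!: fatal)
    then show ?thesis
      unfolding fail_prob_def by (intro measure_pmf.finite_measure_mono) auto
  qed
  finally show ?thesis .
qed

theorem mainTheorem6:
  fixes P :: "('i, 'o) bw_problem" and Pin :: "'i bw_problem_noin"
    and \<Delta> L :: nat
  assumes "wf_problem P" and "wf_problem_noin Pin"
    and "sigma_in P = sigma Pin"
    and "finite (sigma_out P)" and "card (sigma_out P) \<le> L"
    and det_fail: "\<forall>D :: ('i, 'o) det_alg. \<exists>G. admissible \<Delta> Pin G \<and>
                      \<not> valid_out P G (det_output D G)"
  shows "\<forall>A :: ('i, 'o) rand_alg. \<exists>G. admissible \<Delta> Pin G \<and>
           fail_prob P A G \<ge> 1 / real L ^ (\<Delta>\<^sup>2)"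
proof
  fix A :: "('i, 'o) rand_alg"
  define x where "x = 1 / real L"
  have x: "0 \<le> x" "x \<le> 1"
    unfolding x_def by (auto simp: divide_le_eq_1)
  define D :: "('i, 'o) det_alg" where
    "D d v = (SOME g. x ^ d \<le> measure_pmf.prob (A d v) (agrees_or_escapes (sigma_out P) d g))"
    for d v
  have D_likely: "x ^ d \<le> measure_pmf.prob (A d v) (agrees_or_escapes (sigma_out P) d (D d v))"
    for d v
    unfolding D_def x_def using ex_likely_agrees_or_escapes[OF assms(4,5)] by (rule someI_ex)
  obtain G where adm: "admissible \<Delta> Pin G" and invalid: "\<not> valid_out P G (det_output D G)"
    using det_fail by blast
  then have wf: "wf_instance \<Delta> G"
    by (simp add: admissible_def)
  obtain F where F: "F \<subseteq> edges G" "card (wend G ` F) \<le> \<Delta>"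
    "\<forall>out. (\<forall>e\<in>F. out e = det_output D G e) \<longrightarrow> \<not> valid_out P G out"
    using invalid_out_local[OF wf invalid] by blast
  have "1 / real L ^ \<Delta>\<^sup>2 = x ^ \<Delta>\<^sup>2"
    by (simp add: x_def power_one_over)
  also have "\<dots> \<le> (\<Prod>w\<in>wend G ` F. x ^ wdeg G w)"
    using x F wf by (intro power_square_le_prod_power) (auto simp: wf_instance_def finite_subset)
  also have "\<dots> \<le> (\<Prod>w\<in>wend G ` F. measure_pmf.prob (A (wdeg G w) (wview G w))
                     (agrees_or_escapes (sigma_out P) (wdeg G w) (D (wdeg G w) (wview G w))))"
    using x D_likely by (intro prod_mono) auto
  also have "\<dots> \<le> fail_prob P A G"
    using wf F by (intro fail_prob_ge_prod invalid_if_agrees_or_escapes) (auto simp: wf_instance_def)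
  finally show "\<exists>G. admissible \<Delta> Pin G \<and> fail_prob P A G \<ge> 1 / real L ^ \<Delta>\<^sup>2"
    using adm by blast
qed

end
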